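(* Let $\mathbf{D}$ be a 2-category with an enhanced factorization system $(\mathcal{E},\mathcal{M})$ and $\mathbf{C}$ a small 2-category. If $(\mathcal{E},\mathcal{M})$ separates parallel pairs, every 1-cell in $\mathcal{E}$ is a 2-epimorphism, every 1-cell in $\mathcal{M}$ is a 2-monomorphism, and post-composition with 1-cells in $\mathcal{M}$ creates invertible 2-cells, then the enhanced factorization system $(\mathcal{E}^{\mathbf{C}},\mathcal{M}^{\mathbf{C}})$ on $\mathbf{D}^{\mathbf{C}}$ is rigid: for every $\mu\colon F\Rightarrow G$ in $\mathcal{M}^{\mathbf{C}}$ and 2-natural transformation $\alpha\colon G\Rightarrow F$, if $\mu\alpha\cong\mathrm{id}_G$ then $\alpha\mu\cong\mathrm{id}_F$.
   Context: For a 2-category $\mathbf{A}$, an enhanced factorization system on $\mathbf{A}$ is a pair $(\mathcal{E},\mathcal{M})$ of classes of 1-cells of $\mathbf{A}$, each containing all isomorphisms, such that: (i) every 1-cell $\alpha$ factors (not necessarily uniquely) as $\alpha=\mu\circ\varepsilon$ with $\varepsilon\in\mathcal{E}$, $\mu\in\mathcal{M}$; (ii) given $\varepsilon\colon F\to F'$ in $\mathcal{E}$, $\mu\colon G\to G'$ in $\mathcal{M}$, 1-cells $\alpha\colon F\to G$, $\alpha'\colon F'\to G'$ and an invertible 2-cell $\Psi\colon \alpha'\varepsilon\Rightarrow\mu\alpha$, there is a unique pair $(\delta,\widetilde\Psi)$ with $\delta\colon F'\to G$ a 1-cell and $\widetilde\Psi\colon\alpha'\Rightarrow\mu\delta$ an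 invertible 2-cell such that $\delta\varepsilon=\alpha$ and the whiskering $\widetilde\Psi\varepsilon=\Psi$; moreover if $\Psi$ is an identity then $\mu\delta=\alpha'$ and $\widetilde\Psi$ is an identity; (iii) given $\varepsilon\colon F\to F'$ in $\mathcal{E}$, $\mu\colon G\to G'$ in $\mathcal{M}$, parallel 1-cells $\alpha_1,\alpha_2\colon F\to G$ and $\alpha_1',\alpha_2'\colon F'\to G'$ with $\alpha_i'\varepsilon=\mu\alpha_i$ ($i=1,2$), and 2-cells $\Phi\colon\alpha_1\Rightarrow\alpha_2$, $\Phi'\colon\alpha_1'\Rightarrow\alpha_2'$ with $\mu\Phi=\Phi'\varepsilon$, let $\delta_i\colon F'\to G$ be the unique 1-cells with $\delta_i\varepsilon=\alpha_i$ and $\mu\delta_i=\alpha_i'$ (from (ii) with identity 2-cell); then there is a unique 2-cell $\Delta\colon\delta_1\Rightarrow\delta_2$ with $\Delta\varepsilon=\Phi$ and $\mu\Delta=\Phi'$. It is rigid if moreover: for 1-cells $\mu\colon F\to G$ in $\mathcal{M}$ and $\alpha\colon G\to F$, if $\mu\alpha\cong\mathrm{id}_G$ then $\alpha\mu\cong\mathrm{id}_F$. $(\mathcal{E},\mathcal{M})$ separates parallel pairs if whenever $\alpha,\beta\colon F\to G$ are parallel 1-cells for which there exist $\varepsilon\in\mathcal{E}$ with target $F$ and $\alpha\varepsilon=\beta\varepsilon$, and $\mu\in\mathcal{M}$ with source $G$ and $\mu\alpha=\mu\beta$, then $\alpha=\beta$. A 1-cell $\varepsilon\colon F\to G$ is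 a 2-epimorphism if for all 1-cells $\beta,\beta'\colon G\to H$ and 2-cells $\Psi,\Psi'\colon\beta\Rightarrow\beta'$, $\Psi\varepsilon=\Psi'\varepsilon$ implies $\Psi=\Psi'$. A 1-cell $\mu\colon G\to H$ is a 2-monomorphism if for all 1-cells $\beta,\beta'\colon F\to G$ and 2-cells $\Psi,\Psi'\colon\beta\Rightarrow\beta'$, $\mu\Psi=\mu\Psi'$ implies $\Psi=\Psi'$. Post-composition with a 1-cell $\mu$ creates invertible 2-cells if for all parallel 1-cells $\alpha,\beta$ (composable with $\mu$) and every invertible 2-cell $\Psi\colon\mu\alpha\Rightarrow\mu\beta$ there is a unique invertible 2-cell $\widehat\Psi\colon\alpha\Rightarrow\beta$ with $\mu\widehat\Psi=\Psi$; post-composition with 1-cells in $\mathcal{M}$ creates invertible 2-cells if this holds for every $\mu\in\mathcal{M}$. $\mathbf{D}^{\mathbf{C}}$ is the 2-category of 2-functors $\mathbf{C}\to\mathbf{D}$, 2-natural transformations, and modifications. $\mathcal{E}^{\mathbf{C}}$ (resp. $\mathcal{M}^{\mathbf{C}}$) is the class of 2-natural transformations all of whose components lie in $\mathcal{E}$ (resp. $\mathcal{M}$). *)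

theory Defs
  imports Main
begin

text \<open>A (strict) 2-category with objects of type 'o, 1-cells of type 'm and
2-cells of type 'c, each carried by a set. mcomp g f is g after f;
vcomp b a is the vertical composite (first a, then b); hcomp b a is the
horizontal composite (a on the right/first, b on the left/second).\<close>

record ('o, 'm, 'c) two_cat =
  Obj   :: "'o set"
  Mor   :: "'m set"
  msrc  :: "'m \<Rightarrow> 'o"
  mtgt  :: "'m \<Rightarrow> 'o"
  mid   :: "'o \<Rightarrow> 'm"
  mcomp :: "'m \<Rightarrow> 'm \<Rightarrow> 'm"
  Cel   :: "'c set"
  cdom  :: "'c \<Rightarrow> 'm"
  ccod  :: "'c \<Rightarrow> 'm"
  cid   :: "'m \<Rightarrow> 'c"
  vcomp :: "'c \<Rightarrow> 'c \<Rightarrow> 'c"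
  hcomp :: "'c \<Rightarrow> 'c \<Rightarrow> 'c"

definition two_category :: "('o, 'm, 'c) two_cat \<Rightarrow> bool" where
  "two_category A \<longleftrightarrow>
     \<comment> \<open>1-cells form a category\<close>
     (\<forall>f\<in>Mor A. msrc A f \<in> Obj A \<and> mtgt A f \<in> Obj A) \<and>
     (\<forall>x\<in>Obj A. mid A x \<in> Mor A \<and> msrc A (mid A x) = x \<and> mtgt A (mid A x) = x) \<and>
     (\<forall>f\<in>Mor A. \<forall>g\<in>Mor A. mtgt A f = msrc A g \<longrightarrow>
        mcomp A g f \<in> Mor A \<and> msrc A (mcomp A g f) = msrc A f \<and> mtgt A (mcomp A g f) = mtgt A g) \<and>
     (\<forall>f\<in>Mor A. \<forall>g\<in>Mor A. \<forall>h\<in>Mor A. mtgt A f = msrc A g \<and> mtgt A g = msrc A h \<longrightarrow>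
        mcomp A h (mcomp A g f) = mcomp A (mcomp A h g) f) \<and>
     (\<forall>f\<in>Mor A. mcomp A f (mid A (msrc A f)) = f \<and> mcomp A (mid A (mtgt A f)) f = f) \<and>
     \<comment> \<open>2-cells between parallel 1-cells; vertical composition is a category\<close>
     (\<forall>a\<in>Cel A. cdom A a \<in> Mor A \<and> ccod A a \<in> Mor A \<and>
        msrc A (cdom A a) = msrc A (ccod A a) \<and> mtgt A (cdom A a) = mtgt A (ccod A a)) \<and>
     (\<forall>f\<in>Mor A. cid A f \<in> Cel A \<and> cdom A (cid A f) = f \<and> ccod A (cid A f) = f) \<and>
     (\<forall>a\<in>Cel A. \<forall>b\<in>Cel A. ccod A a = cdom A b \<longrightarrow>
        vcomp A b a \<in> Cel A \<and> cdom A (vcomp A b a) = cdom A a \<and> ccod A (vcomp A b a) = ccod A b) \<and>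
     (\<forall>a\<in>Cel A. \<forall>b\<in>Cel A. \<forall>c\<in>Cel A. ccod A a = cdom A b \<and> ccod A b = cdom A c \<longrightarrow>
        vcomp A c (vcomp A b a) = vcomp A (vcomp A c b) a) \<and>
     (\<forall>a\<in>Cel A. vcomp A a (cid A (cdom A a)) = a \<and> vcomp A (cid A (ccod A a)) a = a) \<and>
     \<comment> \<open>horizontal composition\<close>
     (\<forall>a\<in>Cel A. \<forall>b\<in>Cel A. mtgt A (cdom A a) = msrc A (cdom A b) \<longrightarrow>
        hcomp A b a \<in> Cel A \<and> cdom A (hcomp A b a) = mcomp A (cdom A b) (cdom A a) \<and>
        ccod A (hcomp A b a) = mcomp A (ccod A b) (ccod A a)) \<and>
     (\<forall>a\<in>Cel A. \<forall>b\<in>Cel A. \<forall>c\<in>Cel A.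
        mtgt A (cdom A a) = msrc A (cdom A b) \<and> mtgt A (cdom A b) = msrc A (cdom A c) \<longrightarrow>
        hcomp A c (hcomp A b a) = hcomp A (hcomp A c b) a) \<and>
     (\<forall>a\<in>Cel A. hcomp A a (cid A (mid A (msrc A (cdom A a)))) = a \<and>
        hcomp A (cid A (mid A (mtgt A (cdom A a)))) a = a) \<and>
     (\<forall>f\<in>Mor A. \<forall>g\<in>Mor A. mtgt A f = msrc A g \<longrightarrow>
        hcomp A (cid A g) (cid A f) = cid A (mcomp A g f)) \<and>
     \<comment> \<open>interchange law\<close>
     (\<forall>a\<in>Cel A. \<forall>a'\<in>Cel A. \<forall>b\<in>Cel A. \<forall>b'\<in>Cel A.
        ccod A a = cdom A a' \<and> ccod A b = cdom A b' \<and> mtgt A (cdom A a) = msrc A (cdom A b) \<longrightarrow>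
        vcomp A (hcomp A b' a') (hcomp A b a) = hcomp A (vcomp A b' b) (vcomp A a' a))"

text \<open>Whiskerings: lwhisk A \<mu> \<Phi> is \<mu>\<Phi> (post-composition), rwhisk A \<Phi> \<epsilon> is \<Phi>\<epsilon>.\<close>

definition lwhisk :: "('o, 'm, 'c) two_cat \<Rightarrow> 'm \<Rightarrow> 'c \<Rightarrow> 'c" where
  "lwhisk A m a = hcomp A (cid A m) a"

definition rwhisk :: "('o, 'm, 'c) two_cat \<Rightarrow> 'c \<Rightarrow> 'm \<Rightarrow> 'c" where
  "rwhisk A a e = hcomp A a (cid A e)"

definition iso1 :: "('o, 'm, 'c) two_cat \<Rightarrow> 'm \<Rightarrow> bool" where
  "iso1 A f \<longleftrightarrow> f \<in> Mor A \<and> (\<exists>g\<in>Mor A. msrc A g = mtgt A f \<and> mtgt A g = msrc A f \<and>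
      mcomp A g f = mid A (msrc A f) \<and> mcomp A f g = mid A (mtgt A f))"

definition iso2 :: "('o, 'm, 'c) two_cat \<Rightarrow> 'c \<Rightarrow> bool" where
  "iso2 A a \<longleftrightarrow> a \<in> Cel A \<and> (\<exists>b\<in>Cel A. cdom A b = ccod A a \<and> ccod A b = cdom A a \<and>
      vcomp A b a = cid A (cdom A a) \<and> vcomp A a b = cid A (ccod A a))"

definition enhanced_fs :: "('o, 'm, 'c) two_cat \<Rightarrow> 'm set \<Rightarrow> 'm set \<Rightarrow> bool" where
  "enhanced_fs A E M \<longleftrightarrow>
     E \<subseteq> Mor A \<and> M \<subseteq> Mor A \<and>
     {f. iso1 A f} \<subseteq> E \<and> {f. iso1 A f} \<subseteq> M \<and>
     \<comment> \<open>(i) factorization\<close>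
     (\<forall>\<alpha>\<in>Mor A. \<exists>\<epsilon>\<in>E. \<exists>\<mu>\<in>M. mtgt A \<epsilon> = msrc A \<mu> \<and> mcomp A \<mu> \<epsilon> = \<alpha>) \<and>
     \<comment> \<open>(ii) lifting of squares commuting up to invertible 2-cell\<close>
     (\<forall>\<epsilon>\<in>E. \<forall>\<mu>\<in>M. \<forall>\<alpha>\<in>Mor A. \<forall>\<alpha>'\<in>Mor A. \<forall>\<Psi>.
        msrc A \<alpha> = msrc A \<epsilon> \<and> msrc A \<alpha>' = mtgt A \<epsilon> \<and>
        mtgt A \<alpha> = msrc A \<mu> \<and> mtgt A \<alpha>' = mtgt A \<mu> \<and>
        iso2 A \<Psi> \<and> cdom A \<Psi> = mcomp A \<alpha>' \<epsilon> \<and> ccod A \<Psi> = mcomp A \<mu> \<alpha> \<longrightarrow>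
        (\<exists>!p. case p of (\<delta>, \<Psi>t) \<Rightarrow>
            \<delta> \<in> Mor A \<and> msrc A \<delta> = mtgt A \<epsilon> \<and> mtgt A \<delta> = msrc A \<mu> \<and>
            iso2 A \<Psi>t \<and> cdom A \<Psi>t = \<alpha>' \<and> ccod A \<Psi>t = mcomp A \<mu> \<delta> \<and>
            mcomp A \<delta> \<epsilon> = \<alpha> \<and> rwhisk A \<Psi>t \<epsilon> = \<Psi>) \<and>
        (\<Psi> = cid A (cdom A \<Psi>) \<longrightarrow>
           (\<forall>\<delta> \<Psi>t. \<delta> \<in> Mor A \<and> msrc A \<delta> = mtgt A \<epsilon> \<and> mtgt A \<delta> = msrc A \<mu> \<and>
              iso2 A \<Psi>t \<and> cdom A \<Psi>t = \<alpha>' \<and> ccod A \<Psi>t = mcomp A \<mu> \<delta> \<and>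
              mcomp A \<delta> \<epsilon> = \<alpha> \<and> rwhisk A \<Psi>t \<epsilon> = \<Psi> \<longrightarrow>
              mcomp A \<mu> \<delta> = \<alpha>' \<and> \<Psi>t = cid A \<alpha>'))) \<and>
     \<comment> \<open>(iii) lifting of 2-cells\<close>
     (\<forall>\<epsilon>\<in>E. \<forall>\<mu>\<in>M. \<forall>\<alpha>1\<in>Mor A. \<forall>\<alpha>2\<in>Mor A. \<forall>\<alpha>1'\<in>Mor A. \<forall>\<alpha>2'\<in>Mor A.
        \<forall>\<Phi>\<in>Cel A. \<forall>\<Phi>'\<in>Cel A. \<forall>\<delta>1\<in>Mor A. \<forall>\<delta>2\<in>Mor A.
        msrc A \<alpha>1 = msrc A \<epsilon> \<and> mtgt A \<alpha>1 = msrc A \<mu> \<and>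
        msrc A \<alpha>2 = msrc A \<epsilon> \<and> mtgt A \<alpha>2 = msrc A \<mu> \<and>
        msrc A \<alpha>1' = mtgt A \<epsilon> \<and> mtgt A \<alpha>1' = mtgt A \<mu> \<and>
        msrc A \<alpha>2' = mtgt A \<epsilon> \<and> mtgt A \<alpha>2' = mtgt A \<mu> \<and>
        mcomp A \<alpha>1' \<epsilon> = mcomp A \<mu> \<alpha>1 \<and> mcomp A \<alpha>2' \<epsilon> = mcomp A \<mu> \<alpha>2 \<and>
        cdom A \<Phi> = \<alpha>1 \<and> ccod A \<Phi> = \<alpha>2 \<and> cdom A \<Phi>' = \<alpha>1' \<and> ccod A \<Phi>' = \<alpha>2' \<and>
        lwhisk A \<mu> \<Phi> = rwhisk A \<Phi>' \<epsilon> \<and>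
        msrc A \<delta>1 = mtgt A \<epsilon> \<and> mtgt A \<delta>1 = msrc A \<mu> \<and>
        msrc A \<delta>2 = mtgt A \<epsilon> \<and> mtgt A \<delta>2 = msrc A \<mu> \<and>
        mcomp A \<delta>1 \<epsilon> = \<alpha>1 \<and> mcomp A \<mu> \<delta>1 = \<alpha>1' \<and>
        mcomp A \<delta>2 \<epsilon> = \<alpha>2 \<and> mcomp A \<mu> \<delta>2 = \<alpha>2' \<longrightarrow>
        (\<exists>!\<Delta>. \<Delta> \<in> Cel A \<and> cdom A \<Delta> = \<delta>1 \<and> ccod A \<Delta> = \<delta>2 \<and>
              rwhisk A \<Delta> \<epsilon> = \<Phi> \<and> lwhisk A \<mu> \<Delta> = \<Phi>'))"

definition separates_parallel_pairs :: "('o, 'm, 'c) two_cat \<Rightarrow> 'm set \<Rightarrow> 'm set \<Rightarrow> bool" where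
  "separates_parallel_pairs A E M \<longleftrightarrow>
     (\<forall>\<alpha>\<in>Mor A. \<forall>\<beta>\<in>Mor A.
        msrc A \<alpha> = msrc A \<beta> \<and> mtgt A \<alpha> = mtgt A \<beta> \<and>
        (\<exists>\<epsilon>\<in>E. mtgt A \<epsilon> = msrc A \<alpha> \<and> mcomp A \<alpha> \<epsilon> = mcomp A \<beta> \<epsilon>) \<and>
        (\<exists>\<mu>\<in>M. msrc A \<mu> = mtgt A \<alpha> \<and> mcomp A \<mu> \<alpha> = mcomp A \<mu> \<beta>) \<longrightarrow> \<alpha> = \<beta>)"

definition two_epi :: "('o, 'm, 'c) two_cat \<Rightarrow> 'm \<Rightarrow> bool" where
  "two_epi A e \<longleftrightarrow>
     (\<forall>\<Psi>\<in>Cel A. \<forall>\<Psi>'\<in>Cel A.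
        msrc A (cdom A \<Psi>) = mtgt A e \<and> cdom A \<Psi>' = cdom A \<Psi> \<and> ccod A \<Psi>' = ccod A \<Psi> \<and>
        rwhisk A \<Psi> e = rwhisk A \<Psi>' e \<longrightarrow> \<Psi> = \<Psi>')"

definition two_mono :: "('o, 'm, 'c) two_cat \<Rightarrow> 'm \<Rightarrow> bool" where
  "two_mono A m \<longleftrightarrow>
     (\<forall>\<Psi>\<in>Cel A. \<forall>\<Psi>'\<in>Cel A.
        mtgt A (cdom A \<Psi>) = msrc A m \<and> cdom A \<Psi>' = cdom A \<Psi> \<and> ccod A \<Psi>' = ccod A \<Psi> \<and>
        lwhisk A m \<Psi> = lwhisk A m \<Psi>' \<longrightarrow> \<Psi> = \<Psi>')"

definition creates_inv_2cells :: "('o, 'm, 'c) two_cat \<Rightarrow> 'm \<Rightarrow> bool" where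
  "creates_inv_2cells A m \<longleftrightarrow>
     (\<forall>\<alpha>\<in>Mor A. \<forall>\<beta>\<in>Mor A. \<forall>\<Psi>.
        msrc A \<alpha> = msrc A \<beta> \<and> mtgt A \<alpha> = msrc A m \<and> mtgt A \<beta> = msrc A m \<and>
        iso2 A \<Psi> \<and> cdom A \<Psi> = mcomp A m \<alpha> \<and> ccod A \<Psi> = mcomp A m \<beta> \<longrightarrow>
        (\<exists>!\<Psi>h. iso2 A \<Psi>h \<and> cdom A \<Psi>h = \<alpha> \<and> ccod A \<Psi>h = \<beta> \<and> lwhisk A m \<Psi>h = \<Psi>))"

record ('o1, 'm1, 'c1, 'o2, 'm2, 'c2) two_functor =
  fobj  :: "'o1 \<Rightarrow> 'o2"
  fmor  :: "'m1 \<Rightarrow> 'm2"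
  fcell :: "'c1 \<Rightarrow> 'c2"

definition is_two_functor ::
  "('o1, 'm1, 'c1) two_cat \<Rightarrow> ('o2, 'm2, 'c2) two_cat \<Rightarrow>
   ('o1, 'm1, 'c1, 'o2, 'm2, 'c2) two_functor \<Rightarrow> bool" where
  "is_two_functor C D F \<longleftrightarrow>
     (\<forall>x\<in>Obj C. fobj F x \<in> Obj D) \<and>
     (\<forall>f\<in>Mor C. fmor F f \<in> Mor D \<and> msrc D (fmor F f) = fobj F (msrc C f) \<and>
                 mtgt D (fmor F f) = fobj F (mtgt C f)) \<and>
     (\<forall>a\<in>Cel C. fcell F a \<in> Cel D \<and> cdom D (fcell F a) = fmor F (cdom C a) \<and>
                 ccod D (fcell F a) = fmor F (ccod C a)) \<and>
     (\<forall>x\<in>Obj C. fmor F (mid C x) = mid D (fobj F x)) \<and>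
     (\<forall>f\<in>Mor C. \<forall>g\<in>Mor C. mtgt C f = msrc C g \<longrightarrow>
        fmor F (mcomp C g f) = mcomp D (fmor F g) (fmor F f)) \<and>
     (\<forall>f\<in>Mor C. fcell F (cid C f) = cid D (fmor F f)) \<and>
     (\<forall>a\<in>Cel C. \<forall>b\<in>Cel C. ccod C a = cdom C b \<longrightarrow>
        fcell F (vcomp C b a) = vcomp D (fcell F b) (fcell F a)) \<and>
     (\<forall>a\<in>Cel C. \<forall>b\<in>Cel C. mtgt C (cdom C a) = msrc C (cdom C b) \<longrightarrow>
        fcell F (hcomp C b a) = hcomp D (fcell F b) (fcell F a))"

definition is_two_nat ::
  "('o1, 'm1, 'c1) two_cat \<Rightarrow> ('o2, 'm2, 'c2) two_cat \<Rightarrow>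
   ('o1, 'm1, 'c1, 'o2, 'm2, 'c2) two_functor \<Rightarrow> ('o1, 'm1, 'c1, 'o2, 'm2, 'c2) two_functor \<Rightarrow>
   ('o1 \<Rightarrow> 'm2) \<Rightarrow> bool" where
  "is_two_nat C D F G \<theta> \<longleftrightarrow>
     (\<forall>x\<in>Obj C. \<theta> x \<in> Mor D \<and> msrc D (\<theta> x) = fobj F x \<and> mtgt D (\<theta> x) = fobj G x) \<and>
     (\<forall>f\<in>Mor C. mcomp D (fmor G f) (\<theta> (msrc C f)) = mcomp D (\<theta> (mtgt C f)) (fmor F f)) \<and>
     (\<forall>a\<in>Cel C. hcomp D (fcell G a) (cid D (\<theta> (msrc C (cdom C a)))) =
                 hcomp D (cid D (\<theta> (mtgt C (cdom C a)))) (fcell F a))"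

definition is_modification ::
  "('o1, 'm1, 'c1) two_cat \<Rightarrow> ('o2, 'm2, 'c2) two_cat \<Rightarrow>
   ('o1, 'm1, 'c1, 'o2, 'm2, 'c2) two_functor \<Rightarrow> ('o1, 'm1, 'c1, 'o2, 'm2, 'c2) two_functor \<Rightarrow>
   ('o1 \<Rightarrow> 'm2) \<Rightarrow> ('o1 \<Rightarrow> 'm2) \<Rightarrow> ('o1 \<Rightarrow> 'c2) \<Rightarrow> bool" where
  "is_modification C D F G \<theta> \<theta>' \<Gamma> \<longleftrightarrow>
     (\<forall>x\<in>Obj C. \<Gamma> x \<in> Cel D \<and> cdom D (\<Gamma> x) = \<theta> x \<and> ccod D (\<Gamma> x) = \<theta>' x) \<and>
     (\<forall>a\<in>Cel C. hcomp D (fcell G a) (\<Gamma> (msrc C (cdom C a))) =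
                 hcomp D (\<Gamma> (mtgt C (cdom C a))) (fcell F a))"

definition nat_comp :: "('o2, 'm2, 'c2) two_cat \<Rightarrow> ('o1 \<Rightarrow> 'm2) \<Rightarrow> ('o1 \<Rightarrow> 'm2) \<Rightarrow> ('o1 \<Rightarrow> 'm2)" where
  "nat_comp D \<beta> \<alpha> = (\<lambda>x. mcomp D (\<beta> x) (\<alpha> x))"

definition nat_id :: "('o2, 'm2, 'c2) two_cat \<Rightarrow> ('o1, 'm1, 'c1, 'o2, 'm2, 'c2) two_functor \<Rightarrow> ('o1 \<Rightarrow> 'm2)" where
  "nat_id D F = (\<lambda>x. mid D (fobj F x))"

definition nat_iso ::
  "('o1, 'm1, 'c1) two_cat \<Rightarrow> ('o2, 'm2, 'c2) two_cat \<Rightarrow>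
   ('o1, 'm1, 'c1, 'o2, 'm2, 'c2) two_functor \<Rightarrow> ('o1, 'm1, 'c1, 'o2, 'm2, 'c2) two_functor \<Rightarrow>
   ('o1 \<Rightarrow> 'm2) \<Rightarrow> ('o1 \<Rightarrow> 'm2) \<Rightarrow> bool" where
  "nat_iso C D F G \<theta> \<theta>' \<longleftrightarrow>
     (\<exists>\<Gamma> \<Gamma>'. is_modification C D F G \<theta> \<theta>' \<Gamma> \<and> is_modification C D F G \<theta>' \<theta> \<Gamma>' \<and>
        (\<forall>x\<in>Obj C. vcomp D (\<Gamma>' x) (\<Gamma> x) = cid D (\<theta> x) \<and> vcomp D (\<Gamma> x) (\<Gamma>' x) = cid D (\<theta>' x)))"

definition rigid_functor_cat ::
  "('o1, 'm1, 'c1) two_cat \<Rightarrow> ('o2, 'm2, 'c2) two_cat \<Rightarrow> 'm2 set \<Rightarrow> bool" where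
  "rigid_functor_cat C D M \<longleftrightarrow>
     (\<forall>(F :: ('o1, 'm1, 'c1, 'o2, 'm2, 'c2) two_functor) G \<mu> \<alpha>.
        is_two_functor C D F \<and> is_two_functor C D G \<and>
        is_two_nat C D F G \<mu> \<and> (\<forall>x\<in>Obj C. \<mu> x \<in> M) \<and>
        is_two_nat C D G F \<alpha> \<and>
        nat_iso C D G G (nat_comp D \<mu> \<alpha>) (nat_id D G) \<longrightarrow>
        nat_iso C D F F (nat_comp D \<alpha> \<mu>) (nat_id D F))"

end

theory Submission
  imports Defs
begin

(* Let Gamma : mu alpha ~= id be the given invertible modification. In each component,
   whiskering Gamma_x by mu_x gives an invertible 2-cell mu_x alpha_x mu_x ~= mu_x; since
   post-composition with mu_x creates invertible 2-cells, it is mu_x T_x for some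
   T_x : alpha_x mu_x => id. As mu_x is a 2-monomorphism, T and the 2-cells T' obtained from
   the inverse of Gamma are mutually inverse, and the modification axiom for T follows from
   that of Gamma after whiskering by mu_y. *)

definition inverse_2cells :: "('o, 'm, 'c) two_cat \<Rightarrow> 'c \<Rightarrow> 'c \<Rightarrow> bool" where
  "inverse_2cells A a b \<longleftrightarrow> a \<in> Cel A \<and> b \<in> Cel A \<and> cdom A b = ccod A a \<and> ccod A b = cdom A a \<and>
     vcomp A b a = cid A (cdom A a) \<and> vcomp A a b = cid A (ccod A a)"

lemma iso2_iff_inverse_2cells: "iso2 A a \<longleftrightarrow> (\<exists>b. inverse_2cells A a b)"
  unfolding iso2_def inverse_2cells_def by blast

lemma two_monoD:
  "\<lbrakk>two_mono A m; s \<in> Cel A; s' \<in> Cel A; cdom A s' = cdom A s; ccod A s' = ccod A s;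
    mtgt A (cdom A s) = msrc A m; lwhisk A m s = lwhisk A m s'\<rbrakk> \<Longrightarrow> s = s'"
  unfolding two_mono_def by blast

lemma inverse_2cells_sym: "inverse_2cells A a b \<Longrightarrow> inverse_2cells A b a"
  unfolding inverse_2cells_def by simp

lemma creates_inv_2cellsE:
  assumes "creates_inv_2cells A m" "iso2 A c" "cdom A c = mcomp A m p" "ccod A c = mcomp A m q"
    "p \<in> Mor A" "q \<in> Mor A" "msrc A p = msrc A q" "mtgt A p = msrc A m" "mtgt A q = msrc A m"
  obtains s where "s \<in> Cel A" "cdom A s = p" "ccod A s = q" "lwhisk A m s = c"
proof -
  have "\<exists>!s. iso2 A s \<and> cdom A s = p \<and> ccod A s = q \<and> lwhisk A m s = c"
    by (rule assms(1)[unfolded creates_inv_2cells_def, rule_format]) (use assms(2-9) in simp_all)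
  then obtain s where "iso2 A s" "cdom A s = p" "ccod A s = q" "lwhisk A m s = c"
    by blast
  then show thesis using that unfolding iso2_def by blast
qed

locale strict_two_category =
  fixes A :: "('o, 'm, 'c) two_cat"
  assumes two_category: "two_category A"
begin

lemma msrc_in_Obj [simp]: "f \<in> Mor A \<Longrightarrow> msrc A f \<in> Obj A"
  and mtgt_in_Obj [simp]: "f \<in> Mor A \<Longrightarrow> mtgt A f \<in> Obj A"
  using two_category unfolding two_category_def by - (elim conjE; blast)+

lemma mid_in_Mor [simp]: "x \<in> Obj A \<Longrightarrow> mid A x \<in> Mor A"
  and msrc_mid [simp]: "x \<in> Obj A \<Longrightarrow> msrc A (mid A x) = x"
  and mtgt_mid [simp]: "x \<in> Obj A \<Longrightarrow> mtgt A (mid A x) = x"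
  using two_category unfolding two_category_def by - (elim conjE; blast)+

lemma mcomp_in_Mor [simp]:
    "f \<in> Mor A \<Longrightarrow> g \<in> Mor A \<Longrightarrow> mtgt A f = msrc A g \<Longrightarrow> mcomp A g f \<in> Mor A"
  and msrc_mcomp [simp]:
    "f \<in> Mor A \<Longrightarrow> g \<in> Mor A \<Longrightarrow> mtgt A f = msrc A g \<Longrightarrow> msrc A (mcomp A g f) = msrc A f"
  and mtgt_mcomp [simp]:
    "f \<in> Mor A \<Longrightarrow> g \<in> Mor A \<Longrightarrow> mtgt A f = msrc A g \<Longrightarrow> mtgt A (mcomp A g f) = mtgt A g"
  using two_category unfolding two_category_def by - (elim conjE; blast)+

lemma mcomp_assoc:
  "\<lbrakk>f \<in> Mor A; g \<in> Mor A; h \<in> Mor A; mtgt A f = msrc A g; mtgt A g = msrc A h\<rbrakk> \<Longrightarrow>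
    mcomp A h (mcomp A g f) = mcomp A (mcomp A h g) f"
  using two_category unfolding two_category_def by (elim conjE) blast

lemma mcomp_mid_right [simp]: "f \<in> Mor A \<Longrightarrow> mcomp A f (mid A (msrc A f)) = f"
  and mcomp_mid_left [simp]: "f \<in> Mor A \<Longrightarrow> mcomp A (mid A (mtgt A f)) f = f"
  using two_category unfolding two_category_def by - (elim conjE; blast)+

lemma cdom_in_Mor [simp]: "a \<in> Cel A \<Longrightarrow> cdom A a \<in> Mor A"
  and ccod_in_Mor [simp]: "a \<in> Cel A \<Longrightarrow> ccod A a \<in> Mor A"
  and msrc_ccod [simp]: "a \<in> Cel A \<Longrightarrow> msrc A (ccod A a) = msrc A (cdom A a)"
  and mtgt_ccod [simp]: "a \<in> Cel A \<Longrightarrow> mtgt A (ccod A a) = mtgt A (cdom A a)"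
  using two_category unfolding two_category_def by - (elim conjE; metis)+

lemma cid_in_Cel [simp]: "f \<in> Mor A \<Longrightarrow> cid A f \<in> Cel A"
  and cdom_cid [simp]: "f \<in> Mor A \<Longrightarrow> cdom A (cid A f) = f"
  and ccod_cid [simp]: "f \<in> Mor A \<Longrightarrow> ccod A (cid A f) = f"
  using two_category unfolding two_category_def by - (elim conjE; blast)+

lemma vcomp_in_Cel [simp]:
    "a \<in> Cel A \<Longrightarrow> b \<in> Cel A \<Longrightarrow> ccod A a = cdom A b \<Longrightarrow> vcomp A b a \<in> Cel A"
  and cdom_vcomp [simp]:
    "a \<in> Cel A \<Longrightarrow> b \<in> Cel A \<Longrightarrow> ccod A a = cdom A b \<Longrightarrow> cdom A (vcomp A b a) = cdom A a"
  and ccod_vcomp [simp]: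
    "a \<in> Cel A \<Longrightarrow> b \<in> Cel A \<Longrightarrow> ccod A a = cdom A b \<Longrightarrow> ccod A (vcomp A b a) = ccod A b"
  using two_category unfolding two_category_def by - (elim conjE; blast)+

lemma vcomp_cid_right [simp]: "a \<in> Cel A \<Longrightarrow> vcomp A a (cid A (cdom A a)) = a"
  using two_category unfolding two_category_def by (elim conjE) blast

lemma hcomp_in_Cel [simp]:
    "a \<in> Cel A \<Longrightarrow> b \<in> Cel A \<Longrightarrow> mtgt A (cdom A a) = msrc A (cdom A b) \<Longrightarrow> hcomp A b a \<in> Cel A"
  and cdom_hcomp [simp]:
    "a \<in> Cel A \<Longrightarrow> b \<in> Cel A \<Longrightarrow> mtgt A (cdom A a) = msrc A (cdom A b) \<Longrightarrow>
      cdom A (hcomp A b a) = mcomp A (cdom A b) (cdom A a)"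
  and ccod_hcomp [simp]:
    "a \<in> Cel A \<Longrightarrow> b \<in> Cel A \<Longrightarrow> mtgt A (cdom A a) = msrc A (cdom A b) \<Longrightarrow>
      ccod A (hcomp A b a) = mcomp A (ccod A b) (ccod A a)"
  using two_category unfolding two_category_def by - (elim conjE; blast)+

lemma hcomp_assoc:
  "\<lbrakk>a \<in> Cel A; b \<in> Cel A; c \<in> Cel A;
    mtgt A (cdom A a) = msrc A (cdom A b); mtgt A (cdom A b) = msrc A (cdom A c)\<rbrakk> \<Longrightarrow>
    hcomp A c (hcomp A b a) = hcomp A (hcomp A c b) a"
  using two_category unfolding two_category_def by (elim conjE) metis

lemma hcomp_cid_mid_right [simp]: "a \<in> Cel A \<Longrightarrow> hcomp A a (cid A (mid A (msrc A (cdom A a)))) = a"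
  and hcomp_cid_mid_left [simp]: "a \<in> Cel A \<Longrightarrow> hcomp A (cid A (mid A (mtgt A (cdom A a)))) a = a"
  using two_category unfolding two_category_def by - (elim conjE; metis)+

lemma hcomp_cid_cid [simp]:
  "f \<in> Mor A \<Longrightarrow> g \<in> Mor A \<Longrightarrow> mtgt A f = msrc A g \<Longrightarrow> hcomp A (cid A g) (cid A f) = cid A (mcomp A g f)"
  using two_category unfolding two_category_def by (elim conjE) metis

lemma interchange:
  "\<lbrakk>a \<in> Cel A; a' \<in> Cel A; b \<in> Cel A; b' \<in> Cel A;
    ccod A a = cdom A a'; ccod A b = cdom A b'; mtgt A (cdom A a) = msrc A (cdom A b)\<rbrakk> \<Longrightarrow>
    vcomp A (hcomp A b' a') (hcomp A b a) = hcomp A (vcomp A b' b) (vcomp A a' a)"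
  using two_category unfolding two_category_def by (elim conjE) metis

lemma vcomp_cid_cid [simp]: "f \<in> Mor A \<Longrightarrow> vcomp A (cid A f) (cid A f) = cid A f"
  using vcomp_cid_right[of "cid A f"] by simp

lemma lwhisk_cid:
  "f \<in> Mor A \<Longrightarrow> m \<in> Mor A \<Longrightarrow> mtgt A f = msrc A m \<Longrightarrow> lwhisk A m (cid A f) = cid A (mcomp A m f)"
  unfolding lwhisk_def by simp

lemma lwhisk_vcomp:
  "\<lbrakk>m \<in> Mor A; a \<in> Cel A; b \<in> Cel A; ccod A a = cdom A b; mtgt A (cdom A a) = msrc A m\<rbrakk> \<Longrightarrow>
    lwhisk A m (vcomp A b a) = vcomp A (lwhisk A m b) (lwhisk A m a)"
  unfolding lwhisk_def using interchange[of a b "cid A m" "cid A m"] by simp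

lemma rwhisk_vcomp:
  "\<lbrakk>e \<in> Mor A; a \<in> Cel A; b \<in> Cel A; ccod A a = cdom A b; mtgt A e = msrc A (cdom A a)\<rbrakk> \<Longrightarrow>
    rwhisk A (vcomp A b a) e = vcomp A (rwhisk A b e) (rwhisk A a e)"
  unfolding rwhisk_def using interchange[of "cid A e" "cid A e" a b] by simp

lemma inverse_2cells_rwhisk:
  assumes "inverse_2cells A a b" "e \<in> Mor A" "mtgt A e = msrc A (cdom A a)"
  shows "inverse_2cells A (rwhisk A a e) (rwhisk A b e)"
  using assms rwhisk_vcomp[of e a b] rwhisk_vcomp[of e b a]
  unfolding inverse_2cells_def by (simp add: rwhisk_def)

lemma inverse_2cells_lwhisk_reflect:
  assumes m: "m \<in> Mor A" "two_mono A m"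
    and s: "s \<in> Cel A" "s' \<in> Cel A" "cdom A s' = ccod A s" "ccod A s' = cdom A s"
      "mtgt A (cdom A s) = msrc A m"
    and inv: "inverse_2cells A (lwhisk A m s) (lwhisk A m s')"
  shows "inverse_2cells A s s'"
proof -
  have left_inverse: "vcomp A r' r = cid A (cdom A r)"
    if r: "r \<in> Cel A" "r' \<in> Cel A" "cdom A r' = ccod A r" "ccod A r' = cdom A r"
      "mtgt A (cdom A r) = msrc A m"
    and whisk_inv: "vcomp A (lwhisk A m r') (lwhisk A m r) = cid A (cdom A (lwhisk A m r))" for r r'
  proof (rule two_monoD[OF m(2)])
    have "lwhisk A m (vcomp A r' r) = vcomp A (lwhisk A m r') (lwhisk A m r)"
      using m r by (simp add: lwhisk_vcomp)
    also have "\<dots> = lwhisk A m (cid A (cdom A r))"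
      using m r by (simp add: whisk_inv lwhisk_cid) (simp add: lwhisk_def)
    finally show "lwhisk A m (vcomp A r' r) = lwhisk A m (cid A (cdom A r))" .
  qed (use r in simp_all)
  show ?thesis
    using s inv left_inverse[of s s'] left_inverse[of s' s] by (simp add: inverse_2cells_def)
qed

lemma inverse_2cells_lift:
  assumes m: "m \<in> Mor A" "two_mono A m" "creates_inv_2cells A m"
    and ab: "inverse_2cells A a b" and tgt: "mtgt A m = msrc A (cdom A a)"
    and uv: "u \<in> Mor A" "v \<in> Mor A" "msrc A u = msrc A v" "mtgt A u = msrc A m" "mtgt A v = msrc A m"
    and dom: "mcomp A (cdom A a) m = mcomp A m u" and cod: "mcomp A (ccod A a) m = mcomp A m v"
  obtains t t' where "inverse_2cells A t t'" "cdom A t = u" "ccod A t = v"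
    "lwhisk A m t = rwhisk A a m" "lwhisk A m t' = rwhisk A b m"
proof -
  have whisk: "inverse_2cells A (rwhisk A a m) (rwhisk A b m)"
    using inverse_2cells_rwhisk[OF ab m(1) tgt] .
  have a: "a \<in> Cel A" "b \<in> Cel A" "cdom A b = ccod A a" "ccod A b = cdom A a"
    using ab unfolding inverse_2cells_def by simp_all
  have iso: "iso2 A (rwhisk A a m)" "iso2 A (rwhisk A b m)"
    unfolding iso2_iff_inverse_2cells using whisk inverse_2cells_sym[OF whisk] by blast+
  have whisk_dom_cod: "cdom A (rwhisk A a m) = mcomp A m u" "ccod A (rwhisk A a m) = mcomp A m v"
    "cdom A (rwhisk A b m) = mcomp A m v" "ccod A (rwhisk A b m) = mcomp A m u"
    using a m tgt dom cod by (simp_all add: rwhisk_def)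
  obtain t where t: "t \<in> Cel A" "cdom A t = u" "ccod A t = v" "lwhisk A m t = rwhisk A a m"
    by (rule creates_inv_2cellsE[OF m(3) iso(1) whisk_dom_cod(1,2) uv])
  obtain t' where t': "t' \<in> Cel A" "cdom A t' = v" "ccod A t' = u" "lwhisk A m t' = rwhisk A b m"
    by (rule creates_inv_2cellsE[OF m(3) iso(2) whisk_dom_cod(3,4) uv(2,1) uv(3)[symmetric] uv(5,4)])
  have "inverse_2cells A t t'"
    by (rule inverse_2cells_lwhisk_reflect[OF m(1,2)]) (use t t' whisk uv in simp_all)
  with t t' show thesis using that by blast
qed

end

lemma is_two_functor_components [simp]:
  assumes "is_two_functor C D F"
  shows "x \<in> Obj C \<Longrightarrow> fobj F x \<in> Obj D"
    and "f \<in> Mor C \<Longrightarrow> fmor F f \<in> Mor D"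
    and "f \<in> Mor C \<Longrightarrow> msrc D (fmor F f) = fobj F (msrc C f)"
    and "f \<in> Mor C \<Longrightarrow> mtgt D (fmor F f) = fobj F (mtgt C f)"
    and "a \<in> Cel C \<Longrightarrow> fcell F a \<in> Cel D"
    and "a \<in> Cel C \<Longrightarrow> cdom D (fcell F a) = fmor F (cdom C a)"
    and "a \<in> Cel C \<Longrightarrow> ccod D (fcell F a) = fmor F (ccod C a)"
  using assms unfolding is_two_functor_def by simp_all

lemma is_two_nat_components [simp]:
  assumes "is_two_nat C D F G \<theta>" "x \<in> Obj C"
  shows "\<theta> x \<in> Mor D" and "msrc D (\<theta> x) = fobj F x" and "mtgt D (\<theta> x) = fobj G x"
  using assms unfolding is_two_nat_def by blast+

lemma is_two_natD:
  assumes "is_two_nat C D F G \<theta>"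
  shows "f \<in> Mor C \<Longrightarrow> mcomp D (fmor G f) (\<theta> (msrc C f)) = mcomp D (\<theta> (mtgt C f)) (fmor F f)"
    and "a \<in> Cel C \<Longrightarrow> hcomp D (fcell G a) (cid D (\<theta> (msrc C (cdom C a)))) =
                        hcomp D (cid D (\<theta> (mtgt C (cdom C a)))) (fcell F a)"
  using assms unfolding is_two_nat_def by blast+

lemma is_modification_components [simp]:
  assumes "is_modification C D F G \<theta> \<theta>' \<Gamma>" "x \<in> Obj C"
  shows "\<Gamma> x \<in> Cel D" and "cdom D (\<Gamma> x) = \<theta> x" and "ccod D (\<Gamma> x) = \<theta>' x"
  using assms unfolding is_modification_def by blast+

lemma is_modificationD:
  "is_modification C D F G \<theta> \<theta>' \<Gamma> \<Longrightarrow> a \<in> Cel C \<Longrightarrow>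
    hcomp D (fcell G a) (\<Gamma> (msrc C (cdom C a))) = hcomp D (\<Gamma> (mtgt C (cdom C a))) (fcell F a)"
  unfolding is_modification_def by blast

lemma nat_iso_iff_inverse_2cells:
  "nat_iso C D F G \<theta> \<theta>' \<longleftrightarrow>
    (\<exists>\<Gamma> \<Gamma>'. is_modification C D F G \<theta> \<theta>' \<Gamma> \<and> is_modification C D F G \<theta>' \<theta> \<Gamma>' \<and>
      (\<forall>x\<in>Obj C. inverse_2cells D (\<Gamma> x) (\<Gamma>' x)))"
proof -
  have "inverse_2cells D (\<Gamma> x) (\<Gamma>' x) \<longleftrightarrow>
      vcomp D (\<Gamma>' x) (\<Gamma> x) = cid D (\<theta> x) \<and> vcomp D (\<Gamma> x) (\<Gamma>' x) = cid D (\<theta>' x)"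
    if "is_modification C D F G \<theta> \<theta>' \<Gamma>" "is_modification C D F G \<theta>' \<theta> \<Gamma>'" "x \<in> Obj C" for \<Gamma> \<Gamma>' x
    using that unfolding inverse_2cells_def by simp
  then show ?thesis
    unfolding nat_iso_def by blast
qed

locale two_functor_category =
  C: strict_two_category C + D: strict_two_category D
  for C :: "('o1, 'm1, 'c1) two_cat" and D :: "('o2, 'm2, 'c2) two_cat"
begin

lemma is_two_nat_nat_id:
  assumes F: "is_two_functor C D F"
  shows "is_two_nat C D F F (nat_id D F)"
  unfolding is_two_nat_def nat_id_def
proof (intro conjI ballI)
  fix f assume "f \<in> Mor C"
  then show "mcomp D (fmor F f) (mid D (fobj F (msrc C f))) = mcomp D (mid D (fobj F (mtgt C f))) (fmor F f)"
    using D.mcomp_mid_left[of "fmor F f"] D.mcomp_mid_right[of "fmor F f"] F by simp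
next
  fix a assume "a \<in> Cel C"
  then show "hcomp D (fcell F a) (cid D (mid D (fobj F (msrc C (cdom C a))))) =
      hcomp D (cid D (mid D (fobj F (mtgt C (cdom C a))))) (fcell F a)"
    using D.hcomp_cid_mid_left[of "fcell F a"] D.hcomp_cid_mid_right[of "fcell F a"] F by simp
qed (use F in simp_all)

lemma is_two_nat_nat_comp:
  assumes "is_two_functor C D F" "is_two_functor C D G" "is_two_functor C D H"
    and \<mu>: "is_two_nat C D F G \<mu>" and \<alpha>: "is_two_nat C D G H \<alpha>"
  shows "is_two_nat C D F H (nat_comp D \<alpha> \<mu>)"
  unfolding is_two_nat_def nat_comp_def
proof (intro conjI ballI)
  fix f assume f: "f \<in> Mor C"
  let ?x = "msrc C f" and ?y = "mtgt C f"
  have "mcomp D (fmor H f) (mcomp D (\<alpha> ?x) (\<mu> ?x)) = mcomp D (mcomp D (fmor H f) (\<alpha> ?x)) (\<mu> ?x)"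
    by (rule D.mcomp_assoc) (use assms f in simp_all)
  also have "\<dots> = mcomp D (mcomp D (\<alpha> ?y) (fmor G f)) (\<mu> ?x)"
    using is_two_natD(1)[OF \<alpha> f] assms f by simp
  also have "\<dots> = mcomp D (\<alpha> ?y) (mcomp D (fmor G f) (\<mu> ?x))"
    by (rule D.mcomp_assoc[symmetric]) (use assms f in simp_all)
  also have "\<dots> = mcomp D (\<alpha> ?y) (mcomp D (\<mu> ?y) (fmor F f))"
    using is_two_natD(1)[OF \<mu> f] assms f by simp
  also have "\<dots> = mcomp D (mcomp D (\<alpha> ?y) (\<mu> ?y)) (fmor F f)"
    by (rule D.mcomp_assoc) (use assms f in simp_all)
  finally show "mcomp D (fmor H f) (mcomp D (\<alpha> ?x) (\<mu> ?x)) = mcomp D (mcomp D (\<alpha> ?y) (\<mu> ?y)) (fmor F f)" .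
next
  fix a assume a: "a \<in> Cel C"
  let ?x = "msrc C (cdom C a)" and ?y = "mtgt C (cdom C a)"
  have "hcomp D (fcell H a) (cid D (mcomp D (\<alpha> ?x) (\<mu> ?x))) =
      hcomp D (fcell H a) (hcomp D (cid D (\<alpha> ?x)) (cid D (\<mu> ?x)))"
    using assms a by simp
  also have "\<dots> = hcomp D (hcomp D (fcell H a) (cid D (\<alpha> ?x))) (cid D (\<mu> ?x))"
    by (rule D.hcomp_assoc) (use assms a in simp_all)
  also have "\<dots> = hcomp D (hcomp D (cid D (\<alpha> ?y)) (fcell G a)) (cid D (\<mu> ?x))"
    using is_two_natD(2)[OF \<alpha> a] assms a by simp
  also have "\<dots> = hcomp D (cid D (\<alpha> ?y)) (hcomp D (fcell G a) (cid D (\<mu> ?x)))"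
    by (rule D.hcomp_assoc[symmetric]) (use assms a in simp_all)
  also have "\<dots> = hcomp D (cid D (\<alpha> ?y)) (hcomp D (cid D (\<mu> ?y)) (fcell F a))"
    using is_two_natD(2)[OF \<mu> a] assms a by simp
  also have "\<dots> = hcomp D (hcomp D (cid D (\<alpha> ?y)) (cid D (\<mu> ?y))) (fcell F a)"
    by (rule D.hcomp_assoc) (use assms a in simp_all)
  also have "\<dots> = hcomp D (cid D (mcomp D (\<alpha> ?y) (\<mu> ?y))) (fcell F a)"
    using assms a by simp
  finally show "hcomp D (fcell H a) (cid D (mcomp D (\<alpha> ?x) (\<mu> ?x))) =
      hcomp D (cid D (mcomp D (\<alpha> ?y) (\<mu> ?y))) (fcell F a)" .
qed (use assms in simp_all)

lemma is_modification_lwhisk_reflect: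
  assumes F: "is_two_functor C D F" and G: "is_two_functor C D G"
    and \<mu>: "is_two_nat C D F G \<mu>" and mono: "\<forall>x\<in>Obj C. two_mono D (\<mu> x)"
    and \<tau>: "is_two_nat C D F F \<tau>" and \<tau>': "is_two_nat C D F F \<tau>'"
    and \<sigma>: "is_two_nat C D G G \<sigma>" and \<Gamma>: "is_modification C D G G \<sigma> \<sigma>' \<Gamma>"
    and T: "\<forall>x\<in>Obj C. T x \<in> Cel D \<and> cdom D (T x) = \<tau> x \<and> ccod D (T x) = \<tau>' x \<and>
                        lwhisk D (\<mu> x) (T x) = rwhisk D (\<Gamma> x) (\<mu> x)"
  shows "is_modification C D F F \<tau> \<tau>' T"
  unfolding is_modification_def
proof (intro conjI ballI)
  fix a assume a: "a \<in> Cel C"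
  let ?x = "msrc C (cdom C a)" and ?y = "mtgt C (cdom C a)"
  let ?Fa = "fcell F a" and ?Ga = "fcell G a"
  have x: "?x \<in> Obj C" and y: "?y \<in> Obj C" using a by simp_all
  note cells = F G \<mu> \<tau> \<tau>' \<sigma> \<Gamma> a x y T[rule_format, OF x] T[rule_format, OF y]
  have "lwhisk D (\<mu> ?y) (hcomp D ?Fa (T ?x)) = hcomp D (hcomp D (cid D (\<mu> ?y)) ?Fa) (T ?x)"
    unfolding lwhisk_def by (rule D.hcomp_assoc) (use cells in simp_all)
  also have "\<dots> = hcomp D (hcomp D ?Ga (cid D (\<mu> ?x))) (T ?x)"
    using is_two_natD(2)[OF \<mu> a] by simp
  also have "\<dots> = hcomp D ?Ga (lwhisk D (\<mu> ?x) (T ?x))"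
    unfolding lwhisk_def by (rule D.hcomp_assoc[symmetric]) (use cells in simp_all)
  also have "\<dots> = hcomp D ?Ga (hcomp D (\<Gamma> ?x) (cid D (\<mu> ?x)))"
    using cells by (simp add: rwhisk_def)
  also have "\<dots> = hcomp D (hcomp D ?Ga (\<Gamma> ?x)) (cid D (\<mu> ?x))"
    by (rule D.hcomp_assoc) (use cells in simp_all)
  also have "\<dots> = hcomp D (hcomp D (\<Gamma> ?y) ?Ga) (cid D (\<mu> ?x))"
    using is_modificationD[OF \<Gamma> a] by simp
  also have "\<dots> = hcomp D (\<Gamma> ?y) (hcomp D ?Ga (cid D (\<mu> ?x)))"
    by (rule D.hcomp_assoc[symmetric]) (use cells in simp_all)
  also have "\<dots> = hcomp D (\<Gamma> ?y) (hcomp D (cid D (\<mu> ?y)) ?Fa)"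
    using is_two_natD(2)[OF \<mu> a] by simp
  also have "\<dots> = hcomp D (rwhisk D (\<Gamma> ?y) (\<mu> ?y)) ?Fa"
    unfolding rwhisk_def by (rule D.hcomp_assoc) (use cells in simp_all)
  also have "\<dots> = hcomp D (hcomp D (cid D (\<mu> ?y)) (T ?y)) ?Fa"
    using cells by (simp add: lwhisk_def)
  also have "\<dots> = lwhisk D (\<mu> ?y) (hcomp D (T ?y) ?Fa)"
    unfolding lwhisk_def by (rule D.hcomp_assoc[symmetric]) (use cells in simp_all)
  finally have whiskered: "lwhisk D (\<mu> ?y) (hcomp D ?Fa (T ?x)) = lwhisk D (\<mu> ?y) (hcomp D (T ?y) ?Fa)" .
  show "hcomp D ?Fa (T ?x) = hcomp D (T ?y) ?Fa"
  proof (rule two_monoD[OF mono[rule_format, OF y] _ _ _ _ _ whiskered])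
    show "cdom D (hcomp D (T ?y) ?Fa) = cdom D (hcomp D ?Fa (T ?x))"
      using is_two_natD(1)[OF \<tau>, of "cdom C a"] cells by simp
    show "ccod D (hcomp D (T ?y) ?Fa) = ccod D (hcomp D ?Fa (T ?x))"
      using is_two_natD(1)[OF \<tau>', of "ccod C a"] cells by simp
  qed (use cells in simp_all)
qed (use T in simp_all)

lemma inverse_2cells_lift_components:
  assumes \<mu>: "is_two_nat C D F G \<mu>"
    and mono: "\<forall>x\<in>Obj C. two_mono D (\<mu> x)" and creates: "\<forall>x\<in>Obj C. creates_inv_2cells D (\<mu> x)"
    and \<tau>: "is_two_nat C D F F \<tau>" and \<tau>': "is_two_nat C D F F \<tau>'"
    and \<sigma>: "is_two_nat C D G G \<sigma>" and \<Gamma>: "is_modification C D G G \<sigma> \<sigma>' \<Gamma>"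
    and inv: "\<forall>x\<in>Obj C. inverse_2cells D (\<Gamma> x) (\<Gamma>' x)"
    and comm: "\<forall>x\<in>Obj C. mcomp D (\<sigma> x) (\<mu> x) = mcomp D (\<mu> x) (\<tau> x)"
    and comm': "\<forall>x\<in>Obj C. mcomp D (\<sigma>' x) (\<mu> x) = mcomp D (\<mu> x) (\<tau>' x)"
  obtains T T' where "\<forall>x\<in>Obj C. inverse_2cells D (T x) (T' x) \<and> cdom D (T x) = \<tau> x \<and>
      ccod D (T x) = \<tau>' x \<and> lwhisk D (\<mu> x) (T x) = rwhisk D (\<Gamma> x) (\<mu> x) \<and>
      lwhisk D (\<mu> x) (T' x) = rwhisk D (\<Gamma>' x) (\<mu> x)"
proof -
  have lifted: "\<forall>x\<in>Obj C. \<exists>t t'. inverse_2cells D t t' \<and> cdom D t = \<tau> x \<and> ccod D t = \<tau>' x \<and>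
      lwhisk D (\<mu> x) t = rwhisk D (\<Gamma> x) (\<mu> x) \<and> lwhisk D (\<mu> x) t' = rwhisk D (\<Gamma>' x) (\<mu> x)"
  proof
    fix x assume x: "x \<in> Obj C"
    have tgt: "mtgt D (\<mu> x) = msrc D (cdom D (\<Gamma> x))"
      using x \<mu> \<sigma> \<Gamma> by simp
    have uv: "\<tau> x \<in> Mor D" "\<tau>' x \<in> Mor D" "msrc D (\<tau> x) = msrc D (\<tau>' x)"
      "mtgt D (\<tau> x) = msrc D (\<mu> x)" "mtgt D (\<tau>' x) = msrc D (\<mu> x)"
      using x \<mu> \<tau> \<tau>' by simp_all
    have dom_cod: "mcomp D (cdom D (\<Gamma> x)) (\<mu> x) = mcomp D (\<mu> x) (\<tau> x)"
      "mcomp D (ccod D (\<Gamma> x)) (\<mu> x) = mcomp D (\<mu> x) (\<tau>' x)"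
      using x \<Gamma> comm comm' by simp_all
    obtain t t' where "inverse_2cells D t t'" "cdom D t = \<tau> x" "ccod D t = \<tau>' x"
      "lwhisk D (\<mu> x) t = rwhisk D (\<Gamma> x) (\<mu> x)" "lwhisk D (\<mu> x) t' = rwhisk D (\<Gamma>' x) (\<mu> x)"
      by (rule D.inverse_2cells_lift[OF is_two_nat_components(1)[OF \<mu> x] mono[rule_format, OF x]
            creates[rule_format, OF x] inv[rule_format, OF x] tgt uv dom_cod])
    then show "\<exists>t t'. inverse_2cells D t t' \<and> cdom D t = \<tau> x \<and> ccod D t = \<tau>' x \<and>
      lwhisk D (\<mu> x) t = rwhisk D (\<Gamma> x) (\<mu> x) \<and> lwhisk D (\<mu> x) t' = rwhisk D (\<Gamma>' x) (\<mu> x)"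
      by blast
  qed
  obtain T where T: "\<forall>x\<in>Obj C. \<exists>t'. inverse_2cells D (T x) t' \<and> cdom D (T x) = \<tau> x \<and>
      ccod D (T x) = \<tau>' x \<and> lwhisk D (\<mu> x) (T x) = rwhisk D (\<Gamma> x) (\<mu> x) \<and>
      lwhisk D (\<mu> x) t' = rwhisk D (\<Gamma>' x) (\<mu> x)"
    using bchoice[OF lifted] by blast
  show thesis
    using bchoice[OF T] that by blast
qed

lemma nat_iso_lwhisk_reflect:
  assumes F: "is_two_functor C D F" and G: "is_two_functor C D G"
    and \<mu>: "is_two_nat C D F G \<mu>"
    and mono: "\<forall>x\<in>Obj C. two_mono D (\<mu> x)" and creates: "\<forall>x\<in>Obj C. creates_inv_2cells D (\<mu> x)"
    and \<tau>: "is_two_nat C D F F \<tau>" and \<tau>': "is_two_nat C D F F \<tau>'"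
    and \<sigma>: "is_two_nat C D G G \<sigma>" and \<sigma>': "is_two_nat C D G G \<sigma>'"
    and comm: "\<forall>x\<in>Obj C. mcomp D (\<sigma> x) (\<mu> x) = mcomp D (\<mu> x) (\<tau> x)"
    and comm': "\<forall>x\<in>Obj C. mcomp D (\<sigma>' x) (\<mu> x) = mcomp D (\<mu> x) (\<tau>' x)"
    and iso: "nat_iso C D G G \<sigma> \<sigma>'"
  shows "nat_iso C D F F \<tau> \<tau>'"
proof -
  obtain \<Gamma> \<Gamma>' where \<Gamma>: "is_modification C D G G \<sigma> \<sigma>' \<Gamma>" and \<Gamma>': "is_modification C D G G \<sigma>' \<sigma> \<Gamma>'"
    and inv: "\<forall>x\<in>Obj C. inverse_2cells D (\<Gamma> x) (\<Gamma>' x)"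
    using iso unfolding nat_iso_iff_inverse_2cells by blast
  obtain T T' where T: "\<forall>x\<in>Obj C. inverse_2cells D (T x) (T' x) \<and> cdom D (T x) = \<tau> x \<and>
      ccod D (T x) = \<tau>' x \<and> lwhisk D (\<mu> x) (T x) = rwhisk D (\<Gamma> x) (\<mu> x) \<and>
      lwhisk D (\<mu> x) (T' x) = rwhisk D (\<Gamma>' x) (\<mu> x)"
    by (rule inverse_2cells_lift_components[OF \<mu> mono creates \<tau> \<tau>' \<sigma> \<Gamma> inv comm comm'])
  have "is_modification C D F F \<tau> \<tau>' T"
    by (rule is_modification_lwhisk_reflect[OF F G \<mu> mono \<tau> \<tau>' \<sigma> \<Gamma>])
      (use T in \<open>unfold inverse_2cells_def, blast\<close>)
  moreover have "is_modification C D F F \<tau>' \<tau> T'"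
    by (rule is_modification_lwhisk_reflect[OF F G \<mu> mono \<tau>' \<tau> \<sigma>' \<Gamma>'])
      (use T in \<open>unfold inverse_2cells_def, metis\<close>)
  ultimately show ?thesis
    unfolding nat_iso_iff_inverse_2cells using T by blast
qed

end

theorem corollary4p2p1:
  fixes C :: "('o1, 'm1, 'c1) two_cat" and D :: "('o2, 'm2, 'c2) two_cat"
    and E M :: "'m2 set"
  assumes "two_category C" and "two_category D"
    and "enhanced_fs D E M"
    and "separates_parallel_pairs D E M"
    and "\<forall>e\<in>E. two_epi D e"
    and "\<forall>m\<in>M. two_mono D m"
    and "\<forall>m\<in>M. creates_inv_2cells D m"
  shows "rigid_functor_cat C D M"
  unfolding rigid_functor_cat_def
proof (intro allI impI, elim conjE)
  interpret two_functor_category C D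
    by unfold_locales (fact assms(1), fact assms(2))
  fix F G :: "('o1, 'm1, 'c1, 'o2, 'm2, 'c2) two_functor" and \<mu> \<alpha>
  assume F: "is_two_functor C D F" and G: "is_two_functor C D G"
    and \<mu>: "is_two_nat C D F G \<mu>" and \<mu>_in_M: "\<forall>x\<in>Obj C. \<mu> x \<in> M"
    and \<alpha>: "is_two_nat C D G F \<alpha>" and iso: "nat_iso C D G G (nat_comp D \<mu> \<alpha>) (nat_id D G)"
  have mono: "\<forall>x\<in>Obj C. two_mono D (\<mu> x)" and creates: "\<forall>x\<in>Obj C. creates_inv_2cells D (\<mu> x)"
    using \<mu>_in_M assms(6,7) by blast+
  have comm: "\<forall>x\<in>Obj C. mcomp D (nat_comp D \<mu> \<alpha> x) (\<mu> x) = mcomp D (\<mu> x) (nat_comp D \<alpha> \<mu> x)"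
    using \<mu> \<alpha> by (simp add: nat_comp_def D.mcomp_assoc)
  have comm': "\<forall>x\<in>Obj C. mcomp D (nat_id D G x) (\<mu> x) = mcomp D (\<mu> x) (nat_id D F x)"
  proof
    fix x assume "x \<in> Obj C"
    then show "mcomp D (nat_id D G x) (\<mu> x) = mcomp D (\<mu> x) (nat_id D F x)"
      using D.mcomp_mid_left[of "\<mu> x"] D.mcomp_mid_right[of "\<mu> x"] \<mu> by (simp add: nat_id_def)
  qed
  show "nat_iso C D F F (nat_comp D \<alpha> \<mu>) (nat_id D F)"
    by (rule nat_iso_lwhisk_reflect[OF F G \<mu> mono creates is_two_nat_nat_comp[OF F G F \<mu> \<alpha>]
          is_two_nat_nat_id[OF F] is_two_nat_nat_comp[OF G F G \<alpha> \<mu>] is_two_nat_nat_id[OF G]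
          comm comm' iso])
qed

end
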